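(* Let $R$ be a commutative ring with identity and let $a\in R$ be a non-zero element with $a\notin R^{\ast}$. Consider the following conditions on $a$: (i) there exist $b\in R$ and $c\in\operatorname{Sqf} R$ such that $a=b^2c$; (ii) there exist $n\geqslant 0$ and $s_0,s_1,\dots,s_n\in\operatorname{Sqf} R$ such that $a=s_n^{2^n}s_{n-1}^{2^{n-1}}\cdots s_1^2s_0$; (iii) there exist $n\geqslant 1$, $s_1,\dots,s_n\in(\operatorname{Sqf} R)\setminus R^{\ast}$, integers $0\leqslant k_1<k_2<\dots<k_n$, and $c\in R^{\ast}$ such that $a=c\,s_n^{2^{k_n}}s_{n-1}^{2^{k_{n-1}}}\cdots s_1^{2^{k_1}}$; (iv) there exist $n\geqslant 1$ and $s_1,\dots,s_n\in\operatorname{Sqf} R$ such that $s_i\mid s_{i+1}$ for $i=1,\dots,n-1$ and $a=s_1s_2\cdots s_n$; (v) there exist $n\geqslant 1$, $s_1,\dots,s_n\in(\operatorname{Sqf} R)\setminus R^{\ast}$, integers $k_1,\dots,k_n\geqslant 1$, and $c\in R^{\ast}$ such that $s_i\mid s_{i+1}$ and $s_i\not\sim s_{i+1}$ for $i=1,\dots,n-1$, and $a=c\,s_1^{k_1}s_2^{k_2}\cdots s_n^{k_n}$; (vi) there exist $n\geqslant 1$ and $s_1,\dots,s_n\in\operatorname{Sqf} R$ such that $s_i$ and $s_j$ are relatively prime for $i\neq j$, and $a=s_1s_2^2s_3^3\cdots s_n^n$; (vii) there exist $n\geqslant 1$, $s_1,\dots,s_n\in(\operatorname{Sqf} R)\setminus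 R^{\ast}$, integers $1\leqslant k_1<k_2<\dots<k_n$, and $c\in R^{\ast}$ such that $s_i$ and $s_j$ are relatively prime for $i\neq j$, and $a=c\,s_1^{k_1}s_2^{k_2}\cdots s_n^{k_n}$. Then: (ii) implies (i); (ii) and (iii) are equivalent; (iv) and (v) are equivalent; (v) implies (vi); and (vi) and (vii) are equivalent.
   Context: All rings are commutative with identity. $R^{\ast}$ denotes the set of invertible elements of $R$. For $a,b\in R$, $a\sim b$ means $a$ and $b$ are associated, and $a\mid b$ means $a$ divides $b$. Elements $a,b$ are relatively prime if they have no common non-invertible divisor. An element $a\in R$ is square-free if it cannot be written as $a=b^2c$ with $b\in R\setminus R^{\ast}$ and $c\in R$; $\operatorname{Sqf} R$ denotes the set of square-free elements of $R$. *)

theory Defs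
  imports "HOL-Computational_Algebra.Squarefree"
begin

definition assoc :: "'a::comm_ring_1 \<Rightarrow> 'a \<Rightarrow> bool" where
  "assoc a b \<longleftrightarrow> (\<exists>u. u dvd 1 \<and> a = u * b)"

definition relprime :: "'a::comm_ring_1 \<Rightarrow> 'a \<Rightarrow> bool" where
  "relprime a b \<longleftrightarrow> (\<forall>d. d dvd a \<and> d dvd b \<longrightarrow> d dvd 1)"

definition cond_i :: "'a::comm_ring_1 \<Rightarrow> bool" where
  "cond_i a \<longleftrightarrow> (\<exists>b c. squarefree c \<and> a = b^2 * c)"

definition cond_ii :: "'a::comm_ring_1 \<Rightarrow> bool" where
  "cond_ii a \<longleftrightarrow> (\<exists>(n::nat) (s::nat \<Rightarrow> 'a).
     (\<forall>i\<in>{0..n}. squarefree (s i)) \<and> a = (\<Prod>i=0..n. s i ^ (2^i)))"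

definition cond_iii :: "'a::comm_ring_1 \<Rightarrow> bool" where
  "cond_iii a \<longleftrightarrow> (\<exists>(n::nat) (s::nat \<Rightarrow> 'a) (k::nat \<Rightarrow> nat) c. n \<ge> 1 \<and>
     (\<forall>i\<in>{1..n}. squarefree (s i) \<and> \<not> s i dvd 1) \<and>
     (\<forall>i\<in>{1..n}. \<forall>j\<in>{1..n}. i < j \<longrightarrow> k i < k j) \<and>
     c dvd 1 \<and> a = c * (\<Prod>i=1..n. s i ^ (2 ^ k i)))"

definition cond_iv :: "'a::comm_ring_1 \<Rightarrow> bool" where
  "cond_iv a \<longleftrightarrow> (\<exists>(n::nat) (s::nat \<Rightarrow> 'a). n \<ge> 1 \<and>
     (\<forall>i\<in>{1..n}. squarefree (s i)) \<and>
     (\<forall>i. 1 \<le> i \<and> i < n \<longrightarrow> s i dvd s (i+1)) \<and>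
     a = (\<Prod>i=1..n. s i))"

definition cond_v :: "'a::comm_ring_1 \<Rightarrow> bool" where
  "cond_v a \<longleftrightarrow> (\<exists>(n::nat) (s::nat \<Rightarrow> 'a) (k::nat \<Rightarrow> nat) c. n \<ge> 1 \<and>
     (\<forall>i\<in>{1..n}. squarefree (s i) \<and> \<not> s i dvd 1) \<and>
     (\<forall>i\<in>{1..n}. k i \<ge> 1) \<and>
     (\<forall>i. 1 \<le> i \<and> i < n \<longrightarrow> s i dvd s (i+1) \<and> \<not> assoc (s i) (s (i+1))) \<and>
     c dvd 1 \<and> a = c * (\<Prod>i=1..n. s i ^ k i))"

definition cond_vi :: "'a::comm_ring_1 \<Rightarrow> bool" where
  "cond_vi a \<longleftrightarrow> (\<exists>(n::nat) (s::nat \<Rightarrow> 'a). n \<ge> 1 \<and>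
     (\<forall>i\<in>{1..n}. squarefree (s i)) \<and>
     (\<forall>i\<in>{1..n}. \<forall>j\<in>{1..n}. i \<noteq> j \<longrightarrow> relprime (s i) (s j)) \<and>
     a = (\<Prod>i=1..n. s i ^ i))"

definition cond_vii :: "'a::comm_ring_1 \<Rightarrow> bool" where
  "cond_vii a \<longleftrightarrow> (\<exists>(n::nat) (s::nat \<Rightarrow> 'a) (k::nat \<Rightarrow> nat) c. n \<ge> 1 \<and>
     (\<forall>i\<in>{1..n}. squarefree (s i) \<and> \<not> s i dvd 1) \<and>
     1 \<le> k 1 \<and>
     (\<forall>i\<in>{1..n}. \<forall>j\<in>{1..n}. i < j \<longrightarrow> k i < k j) \<and>
     (\<forall>i\<in>{1..n}. \<forall>j\<in>{1..n}. i \<noteq> j \<longrightarrow> relprime (s i) (s j)) \<and>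
     c dvd 1 \<and> a = c * (\<Prod>i=1..n. s i ^ k i))"

end

theory Submission
  imports Defs "HOL-Library.Infinite_Set"
begin

text \<open>Units are harmless throughout: a unit multiple of a squarefree element is squarefree, and
  relative primality is insensitive to unit factors. So the unit factors in (ii) and (vi) can be
  collected into a constant, and conversely the constant of (iii) and (vii) can be absorbed into
  the factor of exponent 1, missing exponents being filled by factors 1. In a divisibility chain
  as in (iv), merging consecutive associated terms gives (v), and writing each power in (v) as
  repeated terms reverses this. Finally, if \<open>s (n + 1) = s n * u\<close> then \<open>u\<close> is coprime to
  \<open>s n\<close> because \<open>s (n + 1)\<close> is squarefree, so the successive quotients of the chain are the
  pairwise coprime layers of (vi).\<close>

lemma is_unit_mult: "(a::'a::comm_monoid_mult) dvd 1 \<Longrightarrow> b dvd 1 \<Longrightarrow> a * b dvd 1"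
  using mult_dvd_mono[of a 1 b 1] by simp

lemma is_unit_power: "(a::'a::comm_monoid_mult) dvd 1 \<Longrightarrow> a ^ n dvd 1"
  by (induction n) (simp_all add: is_unit_mult)

lemma is_unit_prod: "(\<And>i. i \<in> A \<Longrightarrow> f i dvd 1) \<Longrightarrow> prod f A dvd 1"
  using prod_dvd_prod[of A f "\<lambda>_. 1"] by simp

lemma unit_mult_dvd: "(u::'a::comm_monoid_mult) dvd 1 \<Longrightarrow> u * a dvd a"
  using mult_dvd_mono[of u 1 a a] by simp

lemma unit_imp_squarefree: "(u::'a::comm_monoid_mult) dvd 1 \<Longrightarrow> squarefree u"
  unfolding squarefree_def by (metis dvd_trans dvd_triv_left power2_eq_square)

lemma squarefree_unit_mult: "(u::'a::comm_monoid_mult) dvd 1 \<Longrightarrow> squarefree a \<Longrightarrow> squarefree (u * a)"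
  by (rule squarefree_mono[OF unit_mult_dvd])

lemma assoc_refl: "assoc a a"
  unfolding assoc_def by (rule exI[of _ 1]) simp

lemma assoc_sym: "assoc a b \<Longrightarrow> assoc b a"
proof -
  assume "assoc a b"
  then obtain u v where "a = u * b" "1 = u * v"
    unfolding assoc_def dvd_def by blast
  then have "b = v * a" "v dvd 1"
    by (metis mult.assoc mult.commute mult_1, metis dvdI mult.commute)
  then show ?thesis
    unfolding assoc_def by blast
qed

lemma assoc_trans: "assoc a b \<Longrightarrow> assoc b c \<Longrightarrow> assoc a c"
  unfolding assoc_def by (metis is_unit_mult mult.assoc)

lemma assoc_imp_dvd: "assoc a b \<Longrightarrow> a dvd b"
  unfolding assoc_def using unit_mult_dvd by blast

lemma relprime_commute: "relprime a b \<longleftrightarrow> relprime b a"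
  unfolding relprime_def by blast

lemma relprime_unit_left: "u dvd 1 \<Longrightarrow> relprime u b"
  unfolding relprime_def by (meson dvd_trans)

lemma relprime_unit_mult_left: "u dvd 1 \<Longrightarrow> relprime a b \<Longrightarrow> relprime (u * a) b"
  unfolding relprime_def by (meson dvd_trans unit_mult_dvd)

lemma relprime_dvd_right: "relprime a b \<Longrightarrow> c dvd b \<Longrightarrow> relprime a c"
  unfolding relprime_def by (meson dvd_trans)

lemma squarefree_mult_imp_relprime: "squarefree (a * b) \<Longrightarrow> relprime a b"
  unfolding relprime_def by (metis mult_dvd_mono power2_eq_square squarefreeD)

section \<open>Discarding and reinserting unit factors of products\<close>

lemma prod_eq_unit_mult_prod_nonunits:
  fixes f :: "'b \<Rightarrow> 'a::comm_monoid_mult"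
  assumes "finite A"
  obtains c where "c dvd 1" "prod f A = c * prod f {i \<in> A. \<not> f i dvd 1}"
proof
  let ?U = "{i. f i dvd 1}"
  show "prod f (A \<inter> ?U) dvd 1"
    by (rule is_unit_prod) simp
  have "{i \<in> A. \<not> f i dvd 1} = A - ?U"
    by blast
  then show "prod f A = prod f (A \<inter> ?U) * prod f {i \<in> A. \<not> f i dvd 1}"
    using prod.Int_Diff[OF assms] by simp
qed

lemma prod_strict_mono_enumeration:
  fixes A :: "nat set"
  assumes "finite A"
  obtains k where "strict_mono_on {1..card A} k" "k ` {1..card A} = A"
    "prod g A = (\<Prod>j=1..card A. g (k j))"
proof -
  obtain h where h: "bij_betw h {..<card A} A" "strict_mono_on {..<card A} h"
    using ex_bij_betw_strict_mono_card[OF assms] by blast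
  have "bij_betw (\<lambda>j. j - 1) {1..card A} {..<card A}"
    by (rule bij_betw_byWitness[where f' = Suc]) auto
  then have bij: "bij_betw (\<lambda>j. h (j - 1)) {1..card A} A"
    using bij_betw_trans[OF _ h(1)] by (simp add: comp_def)
  show thesis
  proof
    show "strict_mono_on {1..card A} (\<lambda>j. h (j - 1))"
      unfolding strict_mono_on_def by (auto intro: strict_mono_onD[OF h(2)])
    show "(\<lambda>j. h (j - 1)) ` {1..card A} = A"
      using bij by (simp add: bij_betw_def)
    show "prod g A = (\<Prod>j=1..card A. g (h (j - 1)))"
      by (rule prod.reindex_bij_betw[OF bij, symmetric])
  qed
qed

lemma prod_power_discard_units:
  fixes s :: "nat \<Rightarrow> 'a::comm_monoid_mult"
  assumes "finite I" and nonunit: "\<not> (\<Prod>i\<in>I. s i ^ e i) dvd 1"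
  obtains m :: nat and k c where "m \<ge> 1" "c dvd 1" "strict_mono_on {1..m} k" "k ` {1..m} \<subseteq> I"
    "\<forall>j\<in>{1..m}. \<not> s (k j) dvd 1" "(\<Prod>i\<in>I. s i ^ e i) = c * (\<Prod>j=1..m. s (k j) ^ e (k j))"
proof -
  define A where "A = {i \<in> I. \<not> s i ^ e i dvd 1}"
  obtain c where c: "c dvd 1" "(\<Prod>i\<in>I. s i ^ e i) = c * (\<Prod>i\<in>A. s i ^ e i)"
    using prod_eq_unit_mult_prod_nonunits[OF \<open>finite I\<close>] unfolding A_def by blast
  have "finite A"
    using \<open>finite I\<close> by (simp add: A_def)
  then obtain k where k: "strict_mono_on {1..card A} k" "k ` {1..card A} = A"
    "(\<Prod>i\<in>A. s i ^ e i) = (\<Prod>j=1..card A. s (k j) ^ e (k j))"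
    by (rule prod_strict_mono_enumeration)
  show thesis
  proof (rule that)
    have "A \<noteq> {}"
      using nonunit c by (auto simp: is_unit_mult)
    then show "card A \<ge> 1"
      using \<open>finite A\<close> by (simp add: Suc_le_eq card_gt_0_iff)
    show "k ` {1..card A} \<subseteq> I"
      using k(2) unfolding A_def by blast
    show "\<forall>j\<in>{1..card A}. \<not> s (k j) dvd 1"
      using k(2) is_unit_power unfolding A_def by blast
  qed (use c k in simp_all)
qed

definition scatter :: "(nat \<Rightarrow> nat) \<Rightarrow> nat set \<Rightarrow> (nat \<Rightarrow> 'a) \<Rightarrow> nat \<Rightarrow> 'a::one" where
  "scatter k J s i = (if i \<in> k ` J then s (inv_into J k i) else 1)"

lemma scatter_image: "inj_on k J \<Longrightarrow> j \<in> J \<Longrightarrow> scatter k J s (k j) = s j"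
  by (simp add: scatter_def)

lemma prod_power_scatter:
  fixes s :: "nat \<Rightarrow> 'a::comm_monoid_mult"
  assumes "finite I" "inj_on k J" "k ` J \<subseteq> I"
  shows "(\<Prod>i\<in>I. scatter k J s i ^ e i) = (\<Prod>j\<in>J. s j ^ e (k j))"
proof -
  have "(\<Prod>i\<in>I. scatter k J s i ^ e i) = (\<Prod>i\<in>k ` J. scatter k J s i ^ e i)"
    using assms by (intro prod.mono_neutral_right) (auto simp: scatter_def)
  also have "\<dots> = (\<Prod>j\<in>J. s j ^ e (k j))"
    using assms(2) by (simp add: prod.reindex scatter_image)
  finally show ?thesis .
qed

lemma squarefree_scatter:
  "(\<And>j. j \<in> J \<Longrightarrow> squarefree (s j)) \<Longrightarrow> squarefree (scatter k J s i :: 'a::comm_monoid_mult)"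
  by (simp add: scatter_def unit_imp_squarefree inv_into_into)

lemma relprime_scatter:
  assumes "inj_on k J" and coprime: "\<forall>j\<in>J. \<forall>j'\<in>J. j \<noteq> j' \<longrightarrow> relprime (s j) (s j')"
    and "i \<noteq> i'"
  shows "relprime (scatter k J s i) (scatter k J s i')"
proof (cases "i \<in> k ` J \<and> i' \<in> k ` J")
  case True
  then obtain j j' where "j \<in> J" "j' \<in> J" "i = k j" "i' = k j'"
    by blast
  with assms show ?thesis
    by (auto simp: scatter_image)
next
  case False
  then show ?thesis
    by (auto simp: scatter_def relprime_unit_left relprime_commute)
qed

lemma mult_prod_power_fun_upd:
  fixes f :: "nat \<Rightarrow> 'a::comm_monoid_mult"
  assumes "finite I" "L \<in> I" "e L = 1"
  shows "c * (\<Prod>i\<in>I. f i ^ e i) = (\<Prod>i\<in>I. (f(L := c * f L)) i ^ e i)"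
proof -
  have "(\<Prod>i\<in>I - {L}. (f(L := c * f L)) i ^ e i) = (\<Prod>i\<in>I - {L}. f i ^ e i)"
    by (rule prod.cong) auto
  then show ?thesis
    using assms by (simp add: prod.remove mult.assoc)
qed

lemma prod_power_fun_upd_Suc:
  fixes f :: "'b \<Rightarrow> 'a::comm_monoid_mult"
  assumes "finite I" "j \<in> I"
  shows "(\<Prod>i\<in>I. f i ^ (k(j := Suc (k j))) i) = (\<Prod>i\<in>I. f i ^ k i) * f j"
proof -
  have "(\<Prod>i\<in>I - {j}. f i ^ (k(j := Suc (k j))) i) = (\<Prod>i\<in>I - {j}. f i ^ k i)"
    by (rule prod.cong) auto
  then show ?thesis
    using assms by (simp add: prod.remove mult_ac)
qed

lemma prod_power_spread:
  fixes s :: "nat \<Rightarrow> 'a::comm_ring_1" and k e :: "nat \<Rightarrow> nat"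
  assumes mono: "strict_mono_on {1..m} k" and "m \<ge> 1" "L \<le> k 1" "e L = 1" "c dvd 1"
  obtains t where "c * (\<Prod>j=1..m. s j ^ e (k j)) = (\<Prod>i=L..k m. t i ^ e i)"
    "(\<forall>j\<in>{1..m}. squarefree (s j)) \<Longrightarrow> \<forall>i. squarefree (t i)"
    "\<forall>j\<in>{1..m}. \<forall>j'\<in>{1..m}. j \<noteq> j' \<longrightarrow> relprime (s j) (s j') \<Longrightarrow>
       \<forall>i i'. i \<noteq> i' \<longrightarrow> relprime (t i) (t i')"
proof
  let ?g = "scatter k {1..m} s"
  have inj: "inj_on k {1..m}"
    using mono by (rule strict_mono_on_imp_inj_on)
  have "k ` {1..m} \<subseteq> {k 1..k m}"
    using \<open>m \<ge> 1\<close> by (auto intro!: strict_mono_on_leD[OF mono])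
  with \<open>L \<le> k 1\<close> have "k ` {1..m} \<subseteq> {L..k m}"
    by auto
  then have "(\<Prod>i=L..k m. ?g i ^ e i) = (\<Prod>j=1..m. s j ^ e (k j))"
    using inj by (intro prod_power_scatter) auto
  moreover have "L \<in> {L..k m}"
    using \<open>m \<ge> 1\<close> \<open>L \<le> k 1\<close> strict_mono_on_leD[OF mono, of 1 m] by simp
  ultimately show "c * (\<Prod>j=1..m. s j ^ e (k j)) = (\<Prod>i=L..k m. (?g(L := c * ?g L)) i ^ e i)"
    using mult_prod_power_fun_upd[of "{L..k m}" L e c ?g] \<open>e L = 1\<close> by simp
  show "\<forall>i. squarefree ((?g(L := c * ?g L)) i)" if "\<forall>j\<in>{1..m}. squarefree (s j)"
  proof -
    have "squarefree (?g i)" for i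
      using that by (intro squarefree_scatter) auto
    then show ?thesis
      using \<open>c dvd 1\<close> by (simp add: squarefree_unit_mult)
  qed
  show "\<forall>i i'. i \<noteq> i' \<longrightarrow> relprime ((?g(L := c * ?g L)) i) ((?g(L := c * ?g L)) i')"
    if "\<forall>j\<in>{1..m}. \<forall>j'\<in>{1..m}. j \<noteq> j' \<longrightarrow> relprime (s j) (s j')"
    using relprime_scatter[OF inj that] relprime_unit_mult_left[OF \<open>c dvd 1\<close>]
    by (auto simp: relprime_commute)
qed

section \<open>Divisibility chains of squarefree elements\<close>

definition sqf_chain :: "nat \<Rightarrow> (nat \<Rightarrow> 'a::comm_ring_1) \<Rightarrow> bool" where
  "sqf_chain n s \<longleftrightarrow> (\<forall>i\<in>{1..n}. squarefree (s i)) \<and> (\<forall>i. 1 \<le> i \<and> i < n \<longrightarrow> s i dvd s (i + 1))"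

lemma sqf_chain_prefix: "sqf_chain n s \<Longrightarrow> m \<le> n \<Longrightarrow> sqf_chain m s"
  unfolding sqf_chain_def by auto

lemma sqf_chain_dvd:
  assumes "sqf_chain n s" "1 \<le> i" "i \<le> j" "j \<le> n"
  shows "s i dvd s j"
  using assms(3,4)
proof (induction j rule: dec_induct)
  case (step j)
  then have "s j dvd s (j + 1)"
    using assms(1,2) unfolding sqf_chain_def by simp
  with step show ?case
    by (auto intro: dvd_trans)
qed simp

lemma sqf_chain_prod_unit:
  assumes "sqf_chain n s" "s n dvd 1"
  shows "(\<Prod>i=1..n. s i) dvd 1"
  using sqf_chain_dvd[OF assms(1)] assms(2) by (intro is_unit_prod) (auto intro: dvd_trans)

lemma prod_extend_const:
  "(\<Prod>i=1..n+j. if i \<le> n then s i else x) = (\<Prod>i=1..n. s i) * (x::'a::comm_monoid_mult) ^ j"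
proof -
  have "(\<Prod>i=1..n+j. if i \<le> n then s i else x)
      = (\<Prod>i=1..n. if i \<le> n then s i else x) * (\<Prod>i=n+1..n+j. if i \<le> n then s i else x)"
    by (rule prod.ub_add_nat) simp
  then show ?thesis
    by simp
qed

lemma sqf_chain_extend_const:
  assumes "sqf_chain n s" "n \<ge> 1 \<Longrightarrow> s n dvd x" "squarefree x"
  shows "sqf_chain (n + j) (\<lambda>i. if i \<le> n then s i else x)"
proof -
  have "(if i \<le> n then s i else x) dvd (if i + 1 \<le> n then s (i + 1) else x)"
    if "1 \<le> i" for i
  proof (cases "i + 1 \<le> n")
    case True
    then show ?thesis
      using assms(1) that unfolding sqf_chain_def by simp
  next
    case False
    show ?thesis
    proof (cases "i \<le> n")
      case True
      with False have "i = n"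
        by simp
      with False assms(2) that show ?thesis
        by simp
    qed (use False in simp)
  qed
  moreover have "squarefree (if i \<le> n then s i else x)" if "i \<in> {1..n + j}" for i
    using assms(1,3) that unfolding sqf_chain_def by simp
  ultimately show ?thesis
    unfolding sqf_chain_def by blast
qed

lemma sqf_chain_of_powers:
  assumes "sqf_chain m t" "m \<ge> 1" "\<forall>i\<in>{1..m}. k i \<ge> 1" "c dvd 1"
  shows "\<exists>n s. n \<ge> 1 \<and> sqf_chain n s \<and> s n dvd t m \<and> c * (\<Prod>i=1..m. t i ^ k i) = (\<Prod>i=1..n. s i)"
  using assms(2,1,3)
proof (induction m rule: nat_induct_at_least)
  case base
  let ?s = "\<lambda>i. if i \<le> 1 then c * t 1 else t 1"
  have "(\<Prod>i=1..1 + (k 1 - 1). ?s i) = c * t 1 * t 1 ^ (k 1 - 1)"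
    using prod_extend_const[where n = 1 and j = "k 1 - 1" and s = "\<lambda>_. c * t 1" and x = "t 1"] by simp
  moreover have "t 1 ^ k 1 = t 1 * t 1 ^ (k 1 - 1)"
    using base(2) by (cases "k 1") simp_all
  ultimately have prod: "c * (\<Prod>i=1..1. t i ^ k i) = (\<Prod>i=1..1 + (k 1 - 1). ?s i)"
    by (simp add: mult.assoc)
  have "sqf_chain 1 (\<lambda>_. c * t 1)"
    using base \<open>c dvd 1\<close> by (simp add: sqf_chain_def squarefree_unit_mult)
  then have chain: "sqf_chain (1 + (k 1 - 1)) ?s"
    using base \<open>c dvd 1\<close> by (intro sqf_chain_extend_const) (auto simp: sqf_chain_def unit_mult_dvd)
  have "?s (1 + (k 1 - 1)) dvd t 1"
    using \<open>c dvd 1\<close> by (simp add: unit_mult_dvd)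
  with prod chain show ?case
    by (intro exI[of _ "1 + (k 1 - 1)"] exI[of _ ?s]) simp
next
  case (Suc m)
  then obtain n s where s: "n \<ge> 1" "sqf_chain n s" "s n dvd t m"
    "c * (\<Prod>i=1..m. t i ^ k i) = (\<Prod>i=1..n. s i)"
    using Suc.IH sqf_chain_prefix[OF Suc.prems(1), of m] Suc.prems(2) by auto
  let ?s = "\<lambda>i. if i \<le> n then s i else t (Suc m)"
  have "t m dvd t (Suc m)" "squarefree (t (Suc m))" "k (Suc m) \<ge> 1"
    using Suc by (auto simp: sqf_chain_def)
  have "c * (\<Prod>i=1..Suc m. t i ^ k i) = c * (\<Prod>i=1..m. t i ^ k i) * t (Suc m) ^ k (Suc m)"
    using Suc.hyps by (simp add: prod.nat_ivl_Suc' mult_ac)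
  also have "\<dots> = (\<Prod>i=1..n + k (Suc m). ?s i)"
    by (simp only: s(4) prod_extend_const)
  finally have "c * (\<Prod>i=1..Suc m. t i ^ k i) = (\<Prod>i=1..n + k (Suc m). ?s i)" .
  moreover have "sqf_chain (n + k (Suc m)) ?s"
    using s \<open>t m dvd t (Suc m)\<close> \<open>squarefree (t (Suc m))\<close>
    by (intro sqf_chain_extend_const) (auto intro: dvd_trans)
  ultimately show ?case
    using s(1) \<open>k (Suc m) \<ge> 1\<close> by (intro exI[of _ "n + k (Suc m)"] exI[of _ ?s]) simp
qed

definition strict_sqf_chain :: "nat \<Rightarrow> (nat \<Rightarrow> 'a::comm_ring_1) \<Rightarrow> bool" where
  "strict_sqf_chain m t \<longleftrightarrow> (\<forall>i\<in>{1..m}. squarefree (t i) \<and> \<not> t i dvd 1) \<and>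
     (\<forall>i. 1 \<le> i \<and> i < m \<longrightarrow> t i dvd t (i + 1) \<and> \<not> assoc (t i) (t (i + 1)))"

lemma strict_sqf_chain_imp_sqf_chain: "strict_sqf_chain m t \<Longrightarrow> sqf_chain m t"
  unfolding strict_sqf_chain_def sqf_chain_def by blast

lemma strict_sqf_chain_snoc:
  assumes "strict_sqf_chain m t" "m \<ge> 1" "t m dvd x" "\<not> assoc (t m) x" "squarefree x"
  shows "strict_sqf_chain (Suc m) (t(Suc m := x))"
proof -
  have "\<not> x dvd 1"
    using assms(1-3) unfolding strict_sqf_chain_def by (auto dest: dvd_trans)
  with assms show ?thesis
    unfolding strict_sqf_chain_def by (auto simp: less_Suc_eq)
qed

definition strict_chain_decomp :: "'a::comm_ring_1 \<Rightarrow> 'a \<Rightarrow> bool" where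
  "strict_chain_decomp a x \<longleftrightarrow> (\<exists>m t k c. m \<ge> 1 \<and> strict_sqf_chain m t \<and> (\<forall>i\<in>{1..m}. k i \<ge> 1) \<and>
     c dvd 1 \<and> a = c * (\<Prod>i=1..m. t i ^ k i) \<and> assoc (t m) x)"

lemma strict_chain_decomp_unit_mult:
  assumes "u dvd 1" "squarefree x" "\<not> x dvd 1"
  shows "strict_chain_decomp (u * x) x"
  unfolding strict_chain_decomp_def
  by (rule exI[of _ 1], rule exI[of _ "\<lambda>_. x"], rule exI[of _ "\<lambda>_. 1"], rule exI[of _ u])
    (use assms in \<open>simp add: strict_sqf_chain_def assoc_refl\<close>)

lemma strict_chain_decomp_mult_assoc:
  assumes "strict_chain_decomp a x" "assoc x y"
  shows "strict_chain_decomp (a * y) y"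
proof -
  obtain m t k c where rep: "m \<ge> 1" "strict_sqf_chain m t" "\<forall>i\<in>{1..m}. k i \<ge> 1" "c dvd 1"
    "a = c * (\<Prod>i=1..m. t i ^ k i)" "assoc (t m) x"
    using assms(1) unfolding strict_chain_decomp_def by blast
  then have "assoc y (t m)"
    using assms(2) by (meson assoc_sym assoc_trans)
  then obtain w where "w dvd 1" "y = w * t m"
    unfolding assoc_def by blast
  moreover have "(\<Prod>i=1..m. t i ^ (k(m := Suc (k m))) i) = (\<Prod>i=1..m. t i ^ k i) * t m"
    using rep(1) by (intro prod_power_fun_upd_Suc) auto
  ultimately have "a * y = (c * w) * (\<Prod>i=1..m. t i ^ (k(m := Suc (k m))) i)"
    using rep(5) by (simp add: mult_ac)
  moreover have "assoc (t m) y"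
    using \<open>assoc y (t m)\<close> by (rule assoc_sym)
  ultimately show ?thesis
    unfolding strict_chain_decomp_def using rep \<open>w dvd 1\<close>
    by (intro exI[of _ m] exI[of _ t] exI[of _ "k(m := Suc (k m))"] exI[of _ "c * w"])
      (simp add: is_unit_mult)
qed

lemma strict_chain_decomp_mult_nonassoc:
  assumes "strict_chain_decomp a x" "x dvd y" "\<not> assoc x y" "squarefree y"
  shows "strict_chain_decomp (a * y) y"
proof -
  obtain m t k c where rep: "m \<ge> 1" "strict_sqf_chain m t" "\<forall>i\<in>{1..m}. k i \<ge> 1" "c dvd 1"
    "a = c * (\<Prod>i=1..m. t i ^ k i)" "assoc (t m) x"
    using assms(1) unfolding strict_chain_decomp_def by blast
  have "t m dvd y"
    using assoc_imp_dvd[OF rep(6)] assms(2) by (rule dvd_trans)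
  moreover have "\<not> assoc (t m) y"
    using assms(3) rep(6) by (meson assoc_sym assoc_trans)
  ultimately have chain: "strict_sqf_chain (Suc m) (t(Suc m := y))"
    by (rule strict_sqf_chain_snoc[OF rep(2,1) _ _ assms(4)])
  have "(\<Prod>i=1..m. (t(Suc m := y)) i ^ (k(Suc m := 1)) i) = (\<Prod>i=1..m. t i ^ k i)"
    by (rule prod.cong) auto
  then have "(\<Prod>i=1..Suc m. (t(Suc m := y)) i ^ (k(Suc m := 1)) i) = (\<Prod>i=1..m. t i ^ k i) * y"
    by (simp add: prod.nat_ivl_Suc' mult.commute)
  with chain show ?thesis
    unfolding strict_chain_decomp_def using rep
    by (intro exI[of _ "Suc m"] exI[of _ "t(Suc m := y)"] exI[of _ "k(Suc m := 1)"] exI[of _ c])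
      (simp add: mult.assoc assoc_refl)
qed

lemma strict_chain_decomp_of_sqf_chain:
  assumes "sqf_chain n s" "n \<ge> 1" "\<not> s n dvd 1"
  shows "strict_chain_decomp (\<Prod>i=1..n. s i) (s n)"
  using assms(2,1,3)
proof (induction n rule: nat_induct_at_least)
  case base
  then show ?case
    using strict_chain_decomp_unit_mult[of 1 "s 1"] by (simp add: sqf_chain_def)
next
  case (Suc n)
  have chain: "sqf_chain n s"
    using Suc.prems(1) by (rule sqf_chain_prefix) simp
  have "s n dvd s (Suc n)" "squarefree (s (Suc n))"
    using Suc.hyps Suc.prems(1) by (auto simp: sqf_chain_def)
  have split: "(\<Prod>i=1..Suc n. s i) = (\<Prod>i=1..n. s i) * s (Suc n)"
    using Suc.hyps by (simp add: prod.nat_ivl_Suc' mult.commute)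
  consider "s n dvd 1" | "\<not> s n dvd 1" "assoc (s n) (s (Suc n))" | "\<not> s n dvd 1" "\<not> assoc (s n) (s (Suc n))"
    by blast
  then show ?case
  proof cases
    case 1
    then show ?thesis
      unfolding split using Suc.prems(2) \<open>squarefree (s (Suc n))\<close>
      by (intro strict_chain_decomp_unit_mult sqf_chain_prod_unit[OF chain])
  next
    case 2
    then show ?thesis
      unfolding split using Suc.IH[OF chain] by (intro strict_chain_decomp_mult_assoc)
  next
    case 3
    then show ?thesis
      unfolding split using Suc.IH[OF chain] \<open>s n dvd s (Suc n)\<close> \<open>squarefree (s (Suc n))\<close>
      by (intro strict_chain_decomp_mult_nonassoc)
  qed
qed

lemma prod_atLeast1_atMost_Suc:
  "(\<Prod>i=1..Suc n. f i) = f 1 * (\<Prod>i=1..n. f (Suc i))"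
  using prod.atLeast_Suc_atMost[of 1 "Suc n" f] prod.shift_bounds_cl_Suc_ivl[of f 1 n] by simp

lemma relprime_layers_of_sqf_chain:
  assumes "sqf_chain n s" "n \<ge> 1"
  shows "\<exists>r. (\<forall>i\<in>{1..n}. squarefree (r i)) \<and>
    (\<forall>i\<in>{1..n}. \<forall>j\<in>{1..n}. i \<noteq> j \<longrightarrow> relprime (r i) (r j)) \<and>
    (\<Prod>i=1..n. s i) = (\<Prod>i=1..n. r i ^ i) \<and> (\<Prod>i=1..n. r i) = s n"
  using assms(2,1)
proof (induction n rule: nat_induct_at_least)
  case base
  then show ?case
    by (intro exI[of _ s]) (simp add: sqf_chain_def)
next
  case (Suc n)
  obtain r where r: "\<forall>i\<in>{1..n}. squarefree (r i)"
    "\<forall>i\<in>{1..n}. \<forall>j\<in>{1..n}. i \<noteq> j \<longrightarrow> relprime (r i) (r j)"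
    "(\<Prod>i=1..n. s i) = (\<Prod>i=1..n. r i ^ i)" "(\<Prod>i=1..n. r i) = s n"
    using Suc.IH sqf_chain_prefix[OF Suc.prems] by auto
  have "s n dvd s (Suc n)"
    using Suc.hyps Suc.prems unfolding sqf_chain_def by simp
  then obtain u where u: "s (Suc n) = s n * u"
    by (rule dvdE)
  have "squarefree (s n * u)"
    using Suc.prems unfolding sqf_chain_def u[symmetric] by simp
  then have "squarefree u" "relprime u (s n)"
    using squarefree_mono[OF dvd_triv_right] squarefree_mult_imp_relprime relprime_commute by blast+
  have u_relprime: "relprime u (r j)" if "j \<in> {1..n}" for j
  proof (rule relprime_dvd_right[OF \<open>relprime u (s n)\<close>])
    show "r j dvd s n"
      unfolding r(4)[symmetric] using that by (intro dvd_prodI) auto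
  qed
  define r' where "r' i = (if i = 1 then u else r (i - 1))" for i
  have r'_cases: "i = 1 \<and> r' i = u \<or> (\<exists>j\<in>{1..n}. i = Suc j \<and> r' i = r j)"
    if "i \<in> {1..Suc n}" for i
    using that by (cases i) (auto simp: r'_def)
  have "(\<Prod>i=1..Suc n. r' i ^ i) = u * (\<Prod>i=1..n. r i ^ Suc i)"
    unfolding prod_atLeast1_atMost_Suc by (simp add: r'_def)
  also have "\<dots> = (\<Prod>i=1..n. r i ^ i) * ((\<Prod>i=1..n. r i) * u)"
    by (simp add: prod.distrib mult_ac)
  also have "\<dots> = (\<Prod>i=1..n. s i) * s (Suc n)"
    by (simp only: r(3,4) u)
  also have "\<dots> = (\<Prod>i=1..Suc n. s i)"
    using Suc.hyps by (simp add: prod.nat_ivl_Suc' mult.commute)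
  finally have layers: "(\<Prod>i=1..Suc n. s i) = (\<Prod>i=1..Suc n. r' i ^ i)" ..
  have top: "(\<Prod>i=1..Suc n. r' i) = s (Suc n)"
    unfolding prod_atLeast1_atMost_Suc u r(4)[symmetric] by (simp add: r'_def mult.commute)
  have "\<forall>i\<in>{1..Suc n}. squarefree (r' i)"
    using r'_cases r(1) \<open>squarefree u\<close> by fastforce
  moreover have "\<forall>i\<in>{1..Suc n}. \<forall>j\<in>{1..Suc n}. i \<noteq> j \<longrightarrow> relprime (r' i) (r' j)"
  proof (intro ballI impI)
    fix i j
    assume "i \<in> {1..Suc n}" "j \<in> {1..Suc n}" "i \<noteq> j"
    with r'_cases[of i] r'_cases[of j] show "relprime (r' i) (r' j)"
      using r(2) u_relprime by (fastforce simp: relprime_commute)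
  qed
  ultimately show ?case
    using layers top by (intro exI[of _ r']) simp
qed

lemma cond_iv_iff: "cond_iv a \<longleftrightarrow> (\<exists>n s. n \<ge> 1 \<and> sqf_chain n s \<and> a = (\<Prod>i=1..n. s i))"
  unfolding cond_iv_def sqf_chain_def by blast

lemma cond_v_iff:
  "cond_v a \<longleftrightarrow> (\<exists>m t k c. m \<ge> 1 \<and> strict_sqf_chain m t \<and> (\<forall>i\<in>{1..m}. k i \<ge> 1) \<and>
     c dvd 1 \<and> a = c * (\<Prod>i=1..m. t i ^ k i))"
  unfolding cond_v_def strict_sqf_chain_def by blast

lemma cond_ii_imp_cond_i:
  assumes "cond_ii a"
  shows "cond_i a"
proof -
  obtain n s where sq: "\<forall>i\<in>{0..n}. squarefree (s i)" and a: "a = (\<Prod>i=0..n. s i ^ 2 ^ i)"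
    using assms unfolding cond_ii_def by blast
  have "(s i ^ 2 ^ (i - 1)) ^ 2 = s i ^ 2 ^ i" if "i \<ge> 1" for i
    using that by (cases i) (simp_all add: power_mult[symmetric] mult.commute)
  then have "(\<Prod>i=1..n. (s i ^ 2 ^ (i - 1)) ^ 2) = (\<Prod>i=1..n. s i ^ 2 ^ i)"
    by (intro prod.cong) auto
  then have "(\<Prod>i=1..n. s i ^ 2 ^ (i - 1)) ^ 2 = (\<Prod>i=1..n. s i ^ 2 ^ i)"
    by (simp add: prod_power_distrib)
  then have "a = (\<Prod>i=1..n. s i ^ 2 ^ (i - 1)) ^ 2 * s 0"
    unfolding a by (simp add: prod.atLeast_Suc_atMost mult.commute)
  moreover have "squarefree (s 0)"
    using sq by simp
  ultimately show ?thesis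
    unfolding cond_i_def by blast
qed

lemma cond_ii_imp_cond_iii:
  assumes "\<not> a dvd 1" "cond_ii a"
  shows "cond_iii a"
proof -
  obtain n s where sq: "\<forall>i\<in>{0..n}. squarefree (s i)" and a: "a = (\<Prod>i=0..n. s i ^ 2 ^ i)"
    using assms(2) unfolding cond_ii_def by blast
  have "\<not> (\<Prod>i=0..n. s i ^ 2 ^ i) dvd 1"
    using assms(1) a by simp
  then obtain m :: nat and k c where "m \<ge> 1" "c dvd 1" "strict_mono_on {1..m} k" "k ` {1..m} \<subseteq> {0..n}"
    "\<forall>j\<in>{1..m}. \<not> s (k j) dvd 1" "a = c * (\<Prod>j=1..m. s (k j) ^ 2 ^ k j)"
    unfolding a by (rule prod_power_discard_units[OF finite_atLeastAtMost])
  with sq show ?thesis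
    unfolding cond_iii_def strict_mono_on_def
    by (intro exI[of _ m] exI[of _ "\<lambda>j. s (k j)"] exI[of _ k] exI[of _ c]) auto
qed

lemma cond_iii_imp_cond_ii:
  assumes "cond_iii a"
  shows "cond_ii a"
proof -
  obtain n :: nat and s and k :: "nat \<Rightarrow> nat" and c where "n \<ge> 1" and s: "\<forall>i\<in>{1..n}. squarefree (s i) \<and> \<not> s i dvd 1"
    and mono: "strict_mono_on {1..n} k" and "c dvd 1" and a: "a = c * (\<Prod>i=1..n. s i ^ 2 ^ k i)"
    using assms unfolding cond_iii_def strict_mono_on_def by blast
  obtain t where "c * (\<Prod>i=1..n. s i ^ 2 ^ k i) = (\<Prod>i=0..k n. t i ^ 2 ^ i)"
    "\<forall>j\<in>{1..n}. squarefree (s j) \<Longrightarrow> \<forall>i. squarefree (t i)"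
    "\<forall>j\<in>{1..n}. \<forall>j'\<in>{1..n}. j \<noteq> j' \<longrightarrow> relprime (s j) (s j') \<Longrightarrow>
       \<forall>i i'. i \<noteq> i' \<longrightarrow> relprime (t i) (t i')"
    by (rule prod_power_spread[where s = s and L = 0 and e = "\<lambda>i. 2 ^ i", OF mono \<open>n \<ge> 1\<close> _ _ \<open>c dvd 1\<close>]) simp_all
  with s show ?thesis
    unfolding cond_ii_def a by (intro exI[of _ "k n"] exI[of _ t]) auto
qed

lemma cond_iv_imp_cond_v:
  assumes "\<not> a dvd 1" "cond_iv a"
  shows "cond_v a"
proof -
  obtain n s where "n \<ge> 1" "sqf_chain n s" and a: "a = (\<Prod>i=1..n. s i)"
    using assms(2) unfolding cond_iv_iff by blast
  have "\<not> s n dvd 1"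
    using sqf_chain_prod_unit[OF \<open>sqf_chain n s\<close>] assms(1) a by blast
  then have "strict_chain_decomp a (s n)"
    unfolding a by (rule strict_chain_decomp_of_sqf_chain[OF \<open>sqf_chain n s\<close> \<open>n \<ge> 1\<close>])
  then show ?thesis
    unfolding strict_chain_decomp_def cond_v_iff by blast
qed

lemma cond_v_imp_cond_iv:
  assumes "cond_v a"
  shows "cond_iv a"
proof -
  obtain m t k c where "m \<ge> 1" "strict_sqf_chain m t" "\<forall>i\<in>{1..m}. k i \<ge> 1" "c dvd 1"
    and a: "a = c * (\<Prod>i=1..m. t i ^ k i)"
    using assms unfolding cond_v_iff by blast
  then obtain n s where "n \<ge> 1" "sqf_chain n s" "a = (\<Prod>i=1..n. s i)"
    using sqf_chain_of_powers[OF strict_sqf_chain_imp_sqf_chain] unfolding a by blast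
  then show ?thesis
    unfolding cond_iv_iff by blast
qed

lemma cond_iv_imp_cond_vi:
  assumes "cond_iv a"
  shows "cond_vi a"
proof -
  obtain n s where "n \<ge> 1" "sqf_chain n s" and a: "a = (\<Prod>i=1..n. s i)"
    using assms unfolding cond_iv_iff by blast
  then obtain r where "\<forall>i\<in>{1..n}. squarefree (r i)"
    "\<forall>i\<in>{1..n}. \<forall>j\<in>{1..n}. i \<noteq> j \<longrightarrow> relprime (r i) (r j)" "a = (\<Prod>i=1..n. r i ^ i)"
    using relprime_layers_of_sqf_chain by blast
  with \<open>n \<ge> 1\<close> show ?thesis
    unfolding cond_vi_def by blast
qed

lemma cond_vi_imp_cond_vii:
  assumes "\<not> a dvd 1" "cond_vi a"
  shows "cond_vii a"
proof -
  obtain n s where sq: "\<forall>i\<in>{1..n}. squarefree (s i)"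
    and coprime: "\<forall>i\<in>{1..n}. \<forall>j\<in>{1..n}. i \<noteq> j \<longrightarrow> relprime (s i) (s j)"
    and a: "a = (\<Prod>i=1..n. s i ^ i)"
    using assms(2) unfolding cond_vi_def by blast
  have "\<not> (\<Prod>i=1..n. s i ^ i) dvd 1"
    using assms(1) a by simp
  then obtain m :: nat and k c where "m \<ge> 1" "c dvd 1" and mono: "strict_mono_on {1..m} k"
    and "k ` {1..m} \<subseteq> {1..n}" "\<forall>j\<in>{1..m}. \<not> s (k j) dvd 1" "a = c * (\<Prod>j=1..m. s (k j) ^ k j)"
    unfolding a by (rule prod_power_discard_units[OF finite_atLeastAtMost])
  moreover have "relprime (s (k i)) (s (k j))" if "i \<in> {1..m}" "j \<in> {1..m}" "i \<noteq> j" for i j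
  proof -
    have "k i \<noteq> k j"
      using that inj_onD[OF strict_mono_on_imp_inj_on[OF mono]] by blast
    moreover have "k i \<in> {1..n}" "k j \<in> {1..n}"
      using that \<open>k ` {1..m} \<subseteq> {1..n}\<close> by blast+
    ultimately show ?thesis
      using coprime by blast
  qed
  moreover have "k 1 \<ge> 1"
    using \<open>m \<ge> 1\<close> \<open>k ` {1..m} \<subseteq> {1..n}\<close> by (auto simp: image_subset_iff)
  ultimately show ?thesis
    using sq mono unfolding cond_vii_def strict_mono_on_def
    by (intro exI[of _ m] exI[of _ "\<lambda>j. s (k j)"] exI[of _ k] exI[of _ c]) auto
qed

lemma cond_vii_imp_cond_vi:
  assumes "cond_vii a"
  shows "cond_vi a"
proof -
  obtain n :: nat and s and k :: "nat \<Rightarrow> nat" and c where "n \<ge> 1" and s: "\<forall>i\<in>{1..n}. squarefree (s i) \<and> \<not> s i dvd 1"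
    and "1 \<le> k 1" and mono: "strict_mono_on {1..n} k"
    and coprime: "\<forall>i\<in>{1..n}. \<forall>j\<in>{1..n}. i \<noteq> j \<longrightarrow> relprime (s i) (s j)"
    and "c dvd 1" and a: "a = c * (\<Prod>i=1..n. s i ^ k i)"
    using assms unfolding cond_vii_def strict_mono_on_def by blast
  obtain t where "c * (\<Prod>i=1..n. s i ^ k i) = (\<Prod>i=1..k n. t i ^ i)"
    "\<forall>j\<in>{1..n}. squarefree (s j) \<Longrightarrow> \<forall>i. squarefree (t i)"
    "\<forall>j\<in>{1..n}. \<forall>j'\<in>{1..n}. j \<noteq> j' \<longrightarrow> relprime (s j) (s j') \<Longrightarrow>
       \<forall>i i'. i \<noteq> i' \<longrightarrow> relprime (t i) (t i')"
    by (rule prod_power_spread[where s = s and L = 1 and e = "\<lambda>i. i", OF mono \<open>n \<ge> 1\<close> \<open>1 \<le> k 1\<close> _ \<open>c dvd 1\<close>]) simp_all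
  moreover have "k n \<ge> 1"
    using \<open>1 \<le> k 1\<close> strict_mono_on_leD[OF mono, of 1 n] \<open>n \<ge> 1\<close> by simp
  ultimately show ?thesis
    using s coprime unfolding cond_vi_def a by (intro exI[of _ "k n"] exI[of _ t]) auto
qed

theorem proposition1:
  fixes a :: "'a::comm_ring_1"
  assumes "a \<noteq> 0" and "\<not> a dvd 1"
  shows "(cond_ii a \<longrightarrow> cond_i a) \<and>
         (cond_ii a \<longleftrightarrow> cond_iii a) \<and>
         (cond_iv a \<longleftrightarrow> cond_v a) \<and>
         (cond_v a \<longrightarrow> cond_vi a) \<and>
         (cond_vi a \<longleftrightarrow> cond_vii a)"
  using cond_ii_imp_cond_i cond_ii_imp_cond_iii[OF assms(2)] cond_iii_imp_cond_ii
    cond_iv_imp_cond_v[OF assms(2)] cond_v_imp_cond_iv cond_iv_imp_cond_vi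
    cond_vi_imp_cond_vii[OF assms(2)] cond_vii_imp_cond_vi
  by blast

end
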